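(* Let $\mathcal{Q}$ be a class of functions $\mathcal{W}\times\mathcal{Y}^2\to[0,1]$ and let $S$ be drawn from $\mathcal{D}$. Then for every $\delta\in(0,1)$, with probability at least $1-\delta$ over $S$, the following holds simultaneously for all $Q\in\mathcal{Q}$: $$\mathbb{E}_{\mathcal{D}}[Q]\le\hat{\mathbb{E}}_S[Q]+R^{AUC}(\mathcal{Q})+\sqrt{\frac{\ln(1/\delta)(n-1)^2}{2m^2}\sum_{i=1}^m\frac{1}{|\omega_i|\,|\bar\omega_i|^2}}.$$
   Context: Users $w_1,\dots,w_m$ and $n$ items $y_1,\dots,y_n$. For each user $i$, $n_i$ items are drawn independently from a distribution $\mathcal{D}_i$; $\omega_i\subseteq\{1,\dots,n\}$ is the index set of drawn items ($|\omega_i|=n_i\ge1$), $\bar\omega_i=\{1,\dots,n\}\setminus\omega_i$, $n_i'=|\bar\omega_i|\ge1$; the sample $S=\bigcup_i\{(w_i,y_p):p\in\omega_i\}$ is distributed as $\mathcal{D}=\mathcal{D}_1^{n_1}\times\cdots\times\mathcal{D}_m^{n_m}$. For $Q:\mathcal{W}\times\mathcal{Y}^2\to[0,1]$, $\hat{\mathbb{E}}_S[Q]=\frac1m\sum_{i=1}^m\frac{1}{n_in_i'}\sum_{p\in\omega_i}\sum_{q\in\bar\omega_i}Q(w_i,y_p,y_q)$ and $\mathbb{E}_{\mathcal{D}}[Q]=\mathbb{E}_{S\sim\mathcal{D}}[\hat{\mathbb{E}}_S[Q]]$. The empirical AUC Rademacher average is $\hat{R}^{AUC}(\mathcal{Q})=2\,\mathbb{E}_\nu\Big[\sup_{Q\in\mathcal{Q}}\frac1m\sum_{i=1}^m\frac{\nu_i}{n_in_i'}\sum_{p\in\omega_i}\sum_{q\in\bar\omega_i}Q(w_i,y_p,y_q)\Big]$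 with $\nu_1,\dots,\nu_m$ independent uniform $\{-1,+1\}$ variables, and $R^{AUC}(\mathcal{Q})=\mathbb{E}_{S\sim\mathcal{D}}[\hat{R}^{AUC}(\mathcal{Q})]$. *)

theory Defs
  imports "HOL-Probability.Probability"
begin

(* Users are w 0 .. w (m-1), items are y 0 .. y (n-1) (indices shifted from 1..n to 0..<n).
   A sample is a function s :: nat \<times> nat \<Rightarrow> nat, where s (i,k) (i < m, k < ns i) is the
   index of the k-th item drawn for user i; ns i is n_i. *)

definition omega :: "(nat \<times> nat \<Rightarrow> nat) \<Rightarrow> (nat \<Rightarrow> nat) \<Rightarrow> nat \<Rightarrow> nat set" where
  "omega s ns i = {s (i, k) | k. k < ns i}"

definition omegabar :: "nat \<Rightarrow> (nat \<times> nat \<Rightarrow> nat) \<Rightarrow> (nat \<Rightarrow> nat) \<Rightarrow> nat \<Rightarrow> nat set" where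
  "omegabar n s ns i = {..<n} - omega s ns i"

definition user_term ::
  "(nat \<Rightarrow> 'w) \<Rightarrow> (nat \<Rightarrow> 'y) \<Rightarrow> nat \<Rightarrow> (nat \<Rightarrow> nat) \<Rightarrow> ('w \<Rightarrow> 'y \<Rightarrow> 'y \<Rightarrow> real)
     \<Rightarrow> (nat \<times> nat \<Rightarrow> nat) \<Rightarrow> nat \<Rightarrow> real" where
  "user_term w y n ns Q s i =
     (1 / (real (ns i) * real (n - ns i))) *
     (\<Sum>p\<in>omega s ns i. \<Sum>q\<in>omegabar n s ns i. Q (w i) (y p) (y q))"

definition emp_risk ::
  "nat \<Rightarrow> (nat \<Rightarrow> 'w) \<Rightarrow> (nat \<Rightarrow> 'y) \<Rightarrow> nat \<Rightarrow> (nat \<Rightarrow> nat) \<Rightarrow> ('w \<Rightarrow> 'y \<Rightarrow> 'y \<Rightarrow> real)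
     \<Rightarrow> (nat \<times> nat \<Rightarrow> nat) \<Rightarrow> real" where
  "emp_risk m w y n ns Q s = (1 / real m) * (\<Sum>i<m. user_term w y n ns Q s i)"

definition sample_dist :: "nat \<Rightarrow> (nat \<Rightarrow> nat) \<Rightarrow> (nat \<Rightarrow> nat pmf) \<Rightarrow> (nat \<times> nat \<Rightarrow> nat) pmf" where
  "sample_dist m ns D = Pi_pmf {(i, k). i < m \<and> k < ns i} 0 (\<lambda>(i, k). D i)"

definition true_risk ::
  "nat \<Rightarrow> (nat \<Rightarrow> 'w) \<Rightarrow> (nat \<Rightarrow> 'y) \<Rightarrow> nat \<Rightarrow> (nat \<Rightarrow> nat) \<Rightarrow> (nat \<Rightarrow> nat pmf)
     \<Rightarrow> ('w \<Rightarrow> 'y \<Rightarrow> 'y \<Rightarrow> real) \<Rightarrow> real" where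
  "true_risk m w y n ns D Q =
     measure_pmf.expectation (sample_dist m ns D) (\<lambda>s. emp_risk m w y n ns Q s)"

definition rademacher_dist :: "nat \<Rightarrow> (nat \<Rightarrow> real) pmf" where
  "rademacher_dist m = Pi_pmf {..<m} 0 (\<lambda>_. pmf_of_set {-1, 1})"

definition emp_rad_auc ::
  "nat \<Rightarrow> (nat \<Rightarrow> 'w) \<Rightarrow> (nat \<Rightarrow> 'y) \<Rightarrow> nat \<Rightarrow> (nat \<Rightarrow> nat) \<Rightarrow> ('w \<Rightarrow> 'y \<Rightarrow> 'y \<Rightarrow> real) set
     \<Rightarrow> (nat \<times> nat \<Rightarrow> nat) \<Rightarrow> real" where
  "emp_rad_auc m w y n ns QQ s =
     2 * measure_pmf.expectation (rademacher_dist m)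
       (\<lambda>\<nu>. SUP Q\<in>QQ. (1 / real m) * (\<Sum>i<m. \<nu> i * user_term w y n ns Q s i))"

definition rad_auc ::
  "nat \<Rightarrow> (nat \<Rightarrow> 'w) \<Rightarrow> (nat \<Rightarrow> 'y) \<Rightarrow> nat \<Rightarrow> (nat \<Rightarrow> nat) \<Rightarrow> (nat \<Rightarrow> nat pmf)
     \<Rightarrow> ('w \<Rightarrow> 'y \<Rightarrow> 'y \<Rightarrow> real) set \<Rightarrow> real" where
  "rad_auc m w y n ns D QQ =
     measure_pmf.expectation (sample_dist m ns D) (\<lambda>s. emp_rad_auc m w y n ns QQ s)"

end

theory Submission
  imports Defs
begin

(*
  Let \<Phi>(S) = sup_Q (E_D[Q] - \<hat>E_S[Q]). Redrawing a single item of user i changes at most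
  n - 1 of the pairs counted in that user's term, so \<Phi> has bounded differences
  (n - 1) / (m n_i n_i') and McDiarmid's inequality yields the square-root term.
  The expectation of \<Phi> is at most R^AUC by symmetrization with a ghost sample:
  exchanging the draws of the users with Rademacher sign -1 between the two samples
  does not change their joint law.
*)

section \<open>Expectations over distributions with finite support\<close>

lemma expectation_finite_pmf:
  fixes f :: "'a \<Rightarrow> real"
  assumes "finite (set_pmf M)"
  shows "measure_pmf.expectation M f = (\<Sum>x\<in>set_pmf M. pmf M x * f x)"
  using integral_measure_pmf_real[OF assms, of M f] by (simp add: mult.commute)

lemma expectation_finite_pmf_mono:
  fixes f g :: "'a \<Rightarrow> real"
  assumes "finite (set_pmf M)" "\<And>x. x \<in> set_pmf M \<Longrightarrow> f x \<le> g x"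
  shows "measure_pmf.expectation M f \<le> measure_pmf.expectation M g"
  unfolding expectation_finite_pmf[OF assms(1)] by (intro sum_mono mult_left_mono assms(2)) auto

lemma expectation_finite_pmf_swap:
  assumes "finite (set_pmf A)" "finite (set_pmf B)"
  shows "measure_pmf.expectation A (\<lambda>a. measure_pmf.expectation B (\<lambda>b. f a b))
       = measure_pmf.expectation B (\<lambda>b. measure_pmf.expectation A (\<lambda>a. f a b :: real))"
  using assms
  by (simp add: expectation_finite_pmf sum_distrib_left sum.swap[of _ "set_pmf A"] algebra_simps)

lemma expectation_pair_pmf_finite:
  fixes f :: "'a \<times> 'b \<Rightarrow> real"
  assumes "finite (set_pmf A)" "finite (set_pmf B)"
  shows "measure_pmf.expectation (pair_pmf A B) f
       = measure_pmf.expectation A (\<lambda>a. measure_pmf.expectation B (\<lambda>b. f (a, b)))"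
proof -
  have "measure_pmf.expectation (pair_pmf A B) f
      = (\<Sum>x\<in>set_pmf A \<times> set_pmf B. pmf (pair_pmf A B) x * f x)"
    using assms by (subst expectation_finite_pmf) auto
  also have "\<dots> = (\<Sum>a\<in>set_pmf A. \<Sum>b\<in>set_pmf B. pmf A a * (pmf B b * f (a, b)))"
    by (subst sum.cartesian_product) (auto simp: pmf_pair mult.assoc case_prod_beta intro!: sum.cong)
  finally show ?thesis
    using assms by (simp add: expectation_finite_pmf sum_distrib_left)
qed

lemma finite_set_Pi_pmf:
  assumes "finite A" "\<And>x. x \<in> A \<Longrightarrow> finite (set_pmf (p x))"
  shows "finite (set_pmf (Pi_pmf A d p))"
  using assms by (simp add: set_Pi_pmf finite_PiE_dflt)

section \<open>McDiarmid's inequality for finite product distributions\<close>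

lemma Hoeffdings_lemma_finite_pmf:
  fixes X :: "'a \<Rightarrow> real"
  assumes fin: "finite (set_pmf M)" and "l > 0"
    and range: "\<And>x. x \<in> set_pmf M \<Longrightarrow> X x \<in> {a..b}"
  shows "measure_pmf.expectation M (\<lambda>x. exp (l * (X x - measure_pmf.expectation M X)))
           \<le> exp (l\<^sup>2 * (b - a)\<^sup>2 / 8)"
proof -
  have "AE x in measure_pmf M. X x \<in> {a..b}"
    using range by (simp add: AE_measure_pmf_iff)
  then interpret interval_bounded_random_variable "measure_pmf M" X a b
    by unfold_locales auto
  have "ennreal (measure_pmf.expectation M (\<lambda>x. exp (l * (X x - measure_pmf.expectation M X))))
      = nn_integral M (\<lambda>x. exp (l * (X x - measure_pmf.expectation M X)))"
    by (rule nn_integral_eq_integral[symmetric]) (auto intro: integrable_measure_pmf_finite[OF fin])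
  also have "\<dots> \<le> ennreal (exp (l\<^sup>2 * (b - a)\<^sup>2 / 8))"
    by (rule Hoeffdings_lemma_nn_integral[OF \<open>l > 0\<close>])
  finally show ?thesis by simp
qed

lemma Hoeffdings_lemma_finite_pmf_oscillation:
  fixes X :: "'a \<Rightarrow> real"
  assumes fin: "finite (set_pmf M)" and "l > 0"
    and osc: "\<And>x x'. x \<in> set_pmf M \<Longrightarrow> x' \<in> set_pmf M \<Longrightarrow> X x - X x' \<le> c"
  shows "measure_pmf.expectation M (\<lambda>x. exp (l * (X x - measure_pmf.expectation M X)))
           \<le> exp (l\<^sup>2 * c\<^sup>2 / 8)"
proof -
  define a where "a = Min (X ` set_pmf M)"
  have "a \<in> X ` set_pmf M"
    unfolding a_def using fin by (intro Min_in) (auto simp: set_pmf_not_empty)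
  then obtain x0 where x0: "x0 \<in> set_pmf M" "X x0 = a" by auto
  have "X x \<in> {a..a + c}" if "x \<in> set_pmf M" for x
    using that fin osc[OF that x0(1)] x0(2) by (auto simp: a_def)
  from Hoeffdings_lemma_finite_pmf[OF fin \<open>l > 0\<close> this] show ?thesis by simp
qed

definition bounded_differences ::
  "('a \<Rightarrow> 'b) set \<Rightarrow> 'a set \<Rightarrow> (('a \<Rightarrow> 'b) \<Rightarrow> real) \<Rightarrow> ('a \<Rightarrow> real) \<Rightarrow> bool" where
  "bounded_differences S A f c \<longleftrightarrow>
     (\<forall>s\<in>S. \<forall>s'\<in>S. \<forall>x\<in>A. (\<forall>z. z \<noteq> x \<longrightarrow> s z = s' z) \<longrightarrow> f s - f s' \<le> c x)"

lemma fun_upd_in_set_Pi_pmf_insert: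
  assumes "finite A" "x \<notin> A" "g \<in> set_pmf (Pi_pmf A d p)" "y \<in> set_pmf (p x)"
  shows "g(x := y) \<in> set_pmf (Pi_pmf (insert x A) d p)"
  using assms by (subst Pi_pmf_insert) force+

lemma expectation_Pi_pmf_insert:
  fixes F :: "('a \<Rightarrow> 'b) \<Rightarrow> real"
  assumes "finite A" "x \<notin> A" "finite (set_pmf (p x))" "finite (set_pmf (Pi_pmf A d p))"
  shows "measure_pmf.expectation (Pi_pmf (insert x A) d p) F
       = measure_pmf.expectation (Pi_pmf A d p)
           (\<lambda>g. measure_pmf.expectation (p x) (\<lambda>y. F (g(x := y))))"
  unfolding Pi_pmf_insert[OF assms(1,2)] integral_map_pmf
  by (simp add: expectation_pair_pmf_finite[OF assms(3,4)]
      expectation_finite_pmf_swap[OF assms(3,4)] case_prod_beta)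

lemma bounded_differences_average_coordinate:
  fixes f :: "('a \<Rightarrow> 'b) \<Rightarrow> real"
  assumes "finite A" "x \<notin> A" "finite (set_pmf (p x))"
    and bd: "bounded_differences (set_pmf (Pi_pmf (insert x A) d p)) (insert x A) f c"
  shows "bounded_differences (set_pmf (Pi_pmf A d p)) A
           (\<lambda>g. measure_pmf.expectation (p x) (\<lambda>y. f (g(x := y)))) c"
  unfolding bounded_differences_def
proof (intro ballI impI)
  fix g g' z
  assume g: "g \<in> set_pmf (Pi_pmf A d p)" and g': "g' \<in> set_pmf (Pi_pmf A d p)" and "z \<in> A"
    and eq: "\<forall>v. v \<noteq> z \<longrightarrow> g v = g' v"
  have "f (g(x := y)) - f (g'(x := y)) \<le> c z" if "y \<in> set_pmf (p x)" for y
    using bd \<open>z \<in> A\<close> eq fun_upd_in_set_Pi_pmf_insert[OF assms(1,2) g that]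
      fun_upd_in_set_Pi_pmf_insert[OF assms(1,2) g' that]
    unfolding bounded_differences_def by auto
  then have "measure_pmf.expectation (p x) (\<lambda>y. f (g(x := y)) - f (g'(x := y)))
      \<le> measure_pmf.expectation (p x) (\<lambda>_. c z)"
    by (intro expectation_finite_pmf_mono[OF assms(3)])
  then show "measure_pmf.expectation (p x) (\<lambda>y. f (g(x := y)))
      - measure_pmf.expectation (p x) (\<lambda>y. f (g'(x := y))) \<le> c z"
    by (simp add: Bochner_Integration.integral_diff integrable_measure_pmf_finite[OF assms(3)])
qed

lemma mcdiarmid_mgf_Pi_pmf:
  fixes f :: "('a \<Rightarrow> 'b) \<Rightarrow> real"
  assumes "finite A" "\<And>x. x \<in> A \<Longrightarrow> finite (set_pmf (p x))" and "l > 0"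
    and "bounded_differences (set_pmf (Pi_pmf A d p)) A f c"
  shows "measure_pmf.expectation (Pi_pmf A d p)
           (\<lambda>s. exp (l * (f s - measure_pmf.expectation (Pi_pmf A d p) f)))
         \<le> exp (l\<^sup>2 * (\<Sum>x\<in>A. (c x)\<^sup>2) / 8)"
  using assms(1,2,4)
proof (induction A arbitrary: f rule: finite_induct)
  case empty
  then show ?case by simp
next
  case (insert x A)
  let ?P = "Pi_pmf A d p" and ?E = "measure_pmf.expectation"
  have finP: "finite (set_pmf ?P)" and finQ: "finite (set_pmf (p x))"
    using insert by (auto intro!: finite_set_Pi_pmf)
  note E_insert = expectation_Pi_pmf_insert[OF insert(1,2) finQ finP]
  define h where "h g = ?E (p x) (\<lambda>y. f (g(x := y)))" for g
  have IH: "?E ?P (\<lambda>g. exp (l * (h g - ?E ?P h))) \<le> exp (l\<^sup>2 * (\<Sum>x\<in>A. (c x)\<^sup>2) / 8)"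
    unfolding h_def using insert
    by (intro insert.IH bounded_differences_average_coordinate) auto
  have step: "?E (p x) (\<lambda>y. exp (l * (f (g(x := y)) - h g))) \<le> exp (l\<^sup>2 * (c x)\<^sup>2 / 8)"
    if g: "g \<in> set_pmf ?P" for g
    unfolding h_def
  proof (rule Hoeffdings_lemma_finite_pmf_oscillation[OF finQ \<open>l > 0\<close>])
    fix y y' assume "y \<in> set_pmf (p x)" "y' \<in> set_pmf (p x)"
    then show "f (g(x := y)) - f (g(x := y')) \<le> c x"
      using insert.prems(2) fun_upd_in_set_Pi_pmf_insert[OF insert(1,2) g]
      unfolding bounded_differences_def by auto
  qed
  have "?E (Pi_pmf (insert x A) d p) (\<lambda>s. exp (l * (f s - ?E (Pi_pmf (insert x A) d p) f)))
      = ?E ?P (\<lambda>g. ?E (p x) (\<lambda>y. exp (l * (h g - ?E ?P h)) * exp (l * (f (g(x := y)) - h g))))"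
    unfolding E_insert h_def by (simp add: mult_exp_exp algebra_simps)
  also have "\<dots> = ?E ?P (\<lambda>g. exp (l * (h g - ?E ?P h)) * ?E (p x) (\<lambda>y. exp (l * (f (g(x := y)) - h g))))"
    by (simp only: integral_mult_right_zero)
  also have "\<dots> \<le> ?E ?P (\<lambda>g. exp (l * (h g - ?E ?P h)) * exp (l\<^sup>2 * (c x)\<^sup>2 / 8))"
    by (intro expectation_finite_pmf_mono[OF finP] mult_left_mono step) auto
  also have "\<dots> = exp (l\<^sup>2 * (c x)\<^sup>2 / 8) * ?E ?P (\<lambda>g. exp (l * (h g - ?E ?P h)))"
    by (simp add: mult.commute)
  also have "\<dots> \<le> exp (l\<^sup>2 * (c x)\<^sup>2 / 8) * exp (l\<^sup>2 * (\<Sum>x\<in>A. (c x)\<^sup>2) / 8)"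
    by (rule mult_left_mono[OF IH]) simp
  also have "\<dots> = exp (l\<^sup>2 * (\<Sum>x\<in>insert x A. (c x)\<^sup>2) / 8)"
    using insert by (simp add: mult_exp_exp add_divide_distrib distrib_left)
  finally show ?case .
qed

lemma mcdiarmid_Pi_pmf:
  fixes f :: "('a \<Rightarrow> 'b) \<Rightarrow> real"
  assumes "finite A" "\<And>x. x \<in> A \<Longrightarrow> finite (set_pmf (p x))"
    and "bounded_differences (set_pmf (Pi_pmf A d p)) A f c"
    and "t > 0" and "(\<Sum>x\<in>A. (c x)\<^sup>2) > 0"
  shows "measure_pmf.prob (Pi_pmf A d p) {s. f s - measure_pmf.expectation (Pi_pmf A d p) f \<ge> t}
         \<le> exp (- 2 * t\<^sup>2 / (\<Sum>x\<in>A. (c x)\<^sup>2))"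
proof -
  define M where "M = Pi_pmf A d p"
  define C where "C = (\<Sum>x\<in>A. (c x)\<^sup>2)"
  define l where "l = 4 * t / C"
  have "C > 0" "l > 0"
    using assms(4,5) by (simp_all add: C_def l_def)
  have finM: "finite (set_pmf M)"
    unfolding M_def using assms(1,2) by (rule finite_set_Pi_pmf)
  let ?g = "\<lambda>s. f s - measure_pmf.expectation M f"
  have "measure_pmf.prob M {s\<in>UNIV. ?g s \<ge> t} \<le> exp (- l * t) * (\<integral>s\<in>UNIV. exp (l * ?g s) \<partial>M)"
    by (rule measure_pmf.Chernoff_ineq_ge[OF \<open>l > 0\<close>])
      (auto intro: integrable_measure_pmf_finite[OF finM] simp: set_integrable_def)
  also have "\<dots> \<le> exp (- l * t) * exp (l\<^sup>2 * C / 8)"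
    unfolding M_def C_def set_lebesgue_integral_def
    using mcdiarmid_mgf_Pi_pmf[OF assms(1,2) \<open>l > 0\<close> assms(3)] by simp
  also have "\<dots> = exp (- 2 * t\<^sup>2 / C)"
    unfolding mult_exp_exp l_def using \<open>C > 0\<close> by (simp add: field_simps power2_eq_square)
  finally show ?thesis unfolding M_def C_def by simp
qed

lemma bounded_differences_SUP:
  assumes "QQ \<noteq> {}" "\<And>s. bdd_above ((\<lambda>Q. f Q s) ` QQ)"
    and "\<And>Q. Q \<in> QQ \<Longrightarrow> bounded_differences S A (f Q) c"
  shows "bounded_differences S A (\<lambda>s. SUP Q\<in>QQ. f Q s) c"
  unfolding bounded_differences_def
proof (intro ballI impI)
  fix s s' x assume "s \<in> S" "s' \<in> S" "x \<in> A" "\<forall>z. z \<noteq> x \<longrightarrow> s z = s' z"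
  then have "f Q s \<le> (SUP Q\<in>QQ. f Q s') + c x" if "Q \<in> QQ" for Q
    using assms(3)[OF that] cSUP_upper[OF that assms(2)[of s']]
    unfolding bounded_differences_def by fastforce
  then have "(SUP Q\<in>QQ. f Q s) \<le> (SUP Q\<in>QQ. f Q s') + c x"
    by (rule cSUP_least[OF assms(1)])
  then show "(SUP Q\<in>QQ. f Q s) - (SUP Q\<in>QQ. f Q s') \<le> c x"
    by simp
qed

section \<open>Symmetrization with Rademacher signs\<close>

lemma map_pmf_swap_pair_Pi_pmf:
  assumes "finite A"
  shows "map_pmf (\<lambda>(a, b). (\<lambda>x. if x \<in> S then b x else a x, \<lambda>x. if x \<in> S then a x else b x))
           (pair_pmf (Pi_pmf A d p) (Pi_pmf A d p))
         = pair_pmf (Pi_pmf A d p) (Pi_pmf A d p)"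
    (is "map_pmf ?T ?M = ?M")
proof (rule pmf_eqI)
  fix z :: "('a \<Rightarrow> 'b) \<times> ('a \<Rightarrow> 'b)"
  have involution: "?T (?T z) = z" for z
    by (cases z) (auto simp: fun_eq_iff)
  have "inj ?T"
    by (rule inj_on_inverseI[where g = ?T]) (rule involution)
  then have "pmf (map_pmf ?T ?M) (?T (?T z)) = pmf ?M (?T z)"
    by (rule pmf_map_inj')
  then have "pmf (map_pmf ?T ?M) z = pmf ?M (?T z)"
    by (simp only: involution)
  also have "\<dots> = pmf ?M z"
  proof -
    obtain a b where z: "z = (a, b)"
      by (cases z)
    have pmf_pair_Pi: "pmf ?M (f, g) = (if (\<forall>x. x \<notin> A \<longrightarrow> f x = d) \<and> (\<forall>x. x \<notin> A \<longrightarrow> g x = d)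
        then (\<Prod>x\<in>A. pmf (p x) (f x)) * (\<Prod>x\<in>A. pmf (p x) (g x)) else 0)" for f g
      by (auto simp: pmf_pair pmf_Pi[OF assms])
    have "(\<forall>x. x \<notin> A \<longrightarrow> (if x \<in> S then b x else a x) = d)
        \<and> (\<forall>x. x \<notin> A \<longrightarrow> (if x \<in> S then a x else b x) = d)
        \<longleftrightarrow> (\<forall>x. x \<notin> A \<longrightarrow> a x = d) \<and> (\<forall>x. x \<notin> A \<longrightarrow> b x = d)"
      by (auto split: if_splits; metis)
    moreover have "(\<Prod>x\<in>A. pmf (p x) (if x \<in> S then b x else a x))
        * (\<Prod>x\<in>A. pmf (p x) (if x \<in> S then a x else b x))
        = (\<Prod>x\<in>A. pmf (p x) (a x)) * (\<Prod>x\<in>A. pmf (p x) (b x))"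
      unfolding prod.distrib[symmetric] by (intro prod.cong) (auto simp: mult.commute)
    ultimately show ?thesis
      unfolding z prod.case pmf_pair_Pi by (simp only:)
  qed
  finally show "pmf (map_pmf ?T ?M) z = pmf ?M z" .
qed

lemma rademacher_dist_uminus: "map_pmf (\<lambda>\<nu> i. - \<nu> i) (rademacher_dist m) = rademacher_dist m"
proof -
  have "map_pmf uminus (pmf_of_set {-1, 1::real}) = pmf_of_set (uminus ` {-1, 1})"
    by (rule map_pmf_of_set_inj) auto
  also have "uminus ` {-1, 1::real} = {-1, 1}"
    by auto
  finally have "rademacher_dist m = Pi_pmf {..<m} 0 (\<lambda>_. map_pmf uminus (pmf_of_set {-1, 1::real}))"
    unfolding rademacher_dist_def by simp
  also have "\<dots> = map_pmf (\<lambda>h. uminus \<circ> h) (Pi_pmf {..<m} 0 (\<lambda>_. pmf_of_set {-1, 1::real}))"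
    by (rule Pi_pmf_map) auto
  finally show ?thesis
    unfolding rademacher_dist_def by (simp add: comp_def)
qed

lemma finite_set_rademacher_dist: "finite (set_pmf (rademacher_dist m))"
  unfolding rademacher_dist_def by (rule finite_set_Pi_pmf) auto

lemma rademacher_dist_values:
  assumes "\<nu> \<in> set_pmf (rademacher_dist m)" "i < m"
  shows "\<nu> i = -1 \<or> \<nu> i = 1"
  using assms by (auto simp: rademacher_dist_def set_Pi_pmf PiE_dflt_def)

locale rademacher_symmetrization =
  fixes A :: "(nat \<times> 'k) set" and d :: 'b and p :: "nat \<times> 'k \<Rightarrow> 'b pmf"
    and m :: nat and QQ :: "'q set" and u :: "'q \<Rightarrow> (nat \<times> 'k \<Rightarrow> 'b) \<Rightarrow> nat \<Rightarrow> real"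
    and B :: real
  assumes finite_A: "finite A" and finite_p: "\<And>x. x \<in> A \<Longrightarrow> finite (set_pmf (p x))"
    and m_pos: "m > 0" and QQ_nonempty: "QQ \<noteq> {}"
    and u_local: "\<And>Q s s' i. (\<And>k. s (i, k) = s' (i, k)) \<Longrightarrow> u Q s i = u Q s' i"
    and u_bounded: "\<And>Q s i. Q \<in> QQ \<Longrightarrow> i < m \<Longrightarrow> \<bar>u Q s i\<bar> \<le> B"
begin

abbreviation sample :: "(nat \<times> 'k \<Rightarrow> 'b) pmf" where
  "sample \<equiv> Pi_pmf A d p"

definition avg :: "'q \<Rightarrow> (nat \<times> 'k \<Rightarrow> 'b) \<Rightarrow> real" where
  "avg Q s = (1 / real m) * (\<Sum>i<m. u Q s i)"

definition sup_deviation :: "(nat \<times> 'k \<Rightarrow> 'b) \<Rightarrow> real" where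
  "sup_deviation s = (SUP Q\<in>QQ. measure_pmf.expectation sample (avg Q) - avg Q s)"

definition pair_sup_diff :: "(nat \<times> 'k \<Rightarrow> 'b) \<Rightarrow> (nat \<times> 'k \<Rightarrow> 'b) \<Rightarrow> real" where
  "pair_sup_diff s s' = (SUP Q\<in>QQ. avg Q s' - avg Q s)"

definition rad_sup :: "(nat \<Rightarrow> real) \<Rightarrow> (nat \<times> 'k \<Rightarrow> 'b) \<Rightarrow> real" where
  "rad_sup \<nu> s = (SUP Q\<in>QQ. (1 / real m) * (\<Sum>i<m. \<nu> i * u Q s i))"

text \<open>Used as \<open>(mix \<nu> s s', mix \<nu> s' s)\<close>: the users with sign \<open>-1\<close> exchange their draws.\<close>
definition mix :: "(nat \<Rightarrow> real) \<Rightarrow> (nat \<times> 'k \<Rightarrow> 'b) \<Rightarrow> (nat \<times> 'k \<Rightarrow> 'b) \<Rightarrow> nat \<times> 'k \<Rightarrow> 'b" where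
  "mix \<nu> s s' x = (if \<nu> (fst x) = 1 then s x else s' x)"

lemma finite_set_sample: "finite (set_pmf sample)"
  using finite_A finite_p by (rule finite_set_Pi_pmf)

lemma integrable_sample [simp]: "integrable (measure_pmf sample) (f :: _ \<Rightarrow> real)"
  by (rule integrable_measure_pmf_finite[OF finite_set_sample])

lemma integrable_rademacher [simp]: "integrable (measure_pmf (rademacher_dist m)) (f :: _ \<Rightarrow> real)"
  by (rule integrable_measure_pmf_finite[OF finite_set_rademacher_dist])

lemma abs_avg_le:
  assumes "Q \<in> QQ"
  shows "\<bar>avg Q s\<bar> \<le> B"
proof -
  have "\<bar>\<Sum>i<m. u Q s i\<bar> \<le> (\<Sum>i<m. \<bar>u Q s i\<bar>)"
    by (rule sum_abs)
  also have "\<dots> \<le> real m * B"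
    using sum_mono[of "{..<m}" "\<lambda>i. \<bar>u Q s i\<bar>" "\<lambda>_. B"] u_bounded[OF assms] by simp
  finally show ?thesis
    unfolding avg_def using m_pos by (simp add: abs_mult field_simps)
qed

lemma bdd_above_deviation: "bdd_above ((\<lambda>Q. measure_pmf.expectation sample (avg Q) - avg Q s) ` QQ)"
proof (rule bdd_aboveI2)
  fix Q assume "Q \<in> QQ"
  then have "measure_pmf.expectation sample (avg Q) \<le> measure_pmf.expectation sample (\<lambda>_. B)"
    using abs_avg_le by (intro integral_mono) (auto simp: abs_le_iff)
  then show "measure_pmf.expectation sample (avg Q) - avg Q s \<le> 2 * B"
    using abs_avg_le[OF \<open>Q \<in> QQ\<close>, of s] unfolding abs_le_iff by simp
qed

lemma bdd_above_pair_diff: "bdd_above ((\<lambda>Q. avg Q s' - avg Q s) ` QQ)"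
proof (rule bdd_aboveI2)
  fix Q assume "Q \<in> QQ"
  then show "avg Q s' - avg Q s \<le> 2 * B"
    using abs_avg_le[of Q s] abs_avg_le[of Q s'] unfolding abs_le_iff by linarith
qed

lemma bdd_above_rademacher: "bdd_above ((\<lambda>Q. (1 / real m) * (\<Sum>i<m. \<nu> i * u Q s i)) ` QQ)"
proof (rule bdd_aboveI2)
  fix Q assume "Q \<in> QQ"
  have "\<nu> i * u Q s i \<le> \<bar>\<nu> i\<bar> * B" if "i < m" for i
  proof -
    have "\<nu> i * u Q s i \<le> \<bar>\<nu> i\<bar> * \<bar>u Q s i\<bar>"
      by (metis abs_ge_self abs_mult)
    also have "\<dots> \<le> \<bar>\<nu> i\<bar> * B"
      using u_bounded[OF \<open>Q \<in> QQ\<close> that] by (rule mult_left_mono) simp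
    finally show ?thesis .
  qed
  then have "(\<Sum>i<m. \<nu> i * u Q s i) \<le> (\<Sum>i<m. \<bar>\<nu> i\<bar> * B)"
    by (intro sum_mono) simp
  then show "(1 / real m) * (\<Sum>i<m. \<nu> i * u Q s i) \<le> (1 / real m) * (\<Sum>i<m. \<bar>\<nu> i\<bar> * B)"
    by (simp add: divide_right_mono)
qed

lemma deviation_le_sup_deviation:
  "Q \<in> QQ \<Longrightarrow> measure_pmf.expectation sample (avg Q) - avg Q s \<le> sup_deviation s"
  unfolding sup_deviation_def by (rule cSUP_upper[OF _ bdd_above_deviation])

text \<open>Jensen's inequality for the supremum, with a ghost sample \<open>s'\<close>.\<close>
lemma sup_deviation_le_pair_sup_diff:
  "sup_deviation s \<le> measure_pmf.expectation sample (pair_sup_diff s)"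
  unfolding sup_deviation_def
proof (rule cSUP_least[OF QQ_nonempty])
  fix Q assume "Q \<in> QQ"
  have "measure_pmf.expectation sample (avg Q) - avg Q s
      = measure_pmf.expectation sample (\<lambda>s'. avg Q s' - avg Q s)"
    by simp
  also have "\<dots> \<le> measure_pmf.expectation sample (pair_sup_diff s)"
    unfolding pair_sup_diff_def
    by (intro integral_mono cSUP_upper[OF \<open>Q \<in> QQ\<close> bdd_above_pair_diff]) auto
  finally show "measure_pmf.expectation sample (avg Q) - avg Q s
      \<le> measure_pmf.expectation sample (pair_sup_diff s)" .
qed

lemma expectation_pair_mix:
  "measure_pmf.expectation (pair_pmf sample sample) (\<lambda>(s, s'). F (mix \<nu> s s') (mix \<nu> s' s))
   = measure_pmf.expectation (pair_pmf sample sample) (\<lambda>(s, s'). F s s' :: real)"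
proof -
  have "(\<lambda>(a, b). (\<lambda>x. if x \<in> {x. \<nu> (fst x) \<noteq> 1} then b x else a x,
                     \<lambda>x. if x \<in> {x. \<nu> (fst x) \<noteq> 1} then a x else b x))
      = (\<lambda>(s, s'). (mix \<nu> s s', mix \<nu> s' s))"
    by (auto simp: mix_def fun_eq_iff)
  then have "map_pmf (\<lambda>(s, s'). (mix \<nu> s s', mix \<nu> s' s)) (pair_pmf sample sample)
      = pair_pmf sample sample"
    using map_pmf_swap_pair_Pi_pmf[OF finite_A, of "{x. \<nu> (fst x) \<noteq> 1}" d p] by simp
  then have "measure_pmf.expectation (pair_pmf sample sample) (\<lambda>(s, s'). F s s')
      = measure_pmf.expectation (map_pmf (\<lambda>(s, s'). (mix \<nu> s s', mix \<nu> s' s)) (pair_pmf sample sample))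
          (\<lambda>(s, s'). F s s')"
    by simp
  also have "\<dots> = measure_pmf.expectation (pair_pmf sample sample)
                    (\<lambda>(s, s'). F (mix \<nu> s s') (mix \<nu> s' s))"
    by (simp add: case_prod_unfold)
  finally show ?thesis ..
qed

lemma u_mix: "u Q (mix \<nu> s s') i = (if \<nu> i = 1 then u Q s i else u Q s' i)"
  by (auto simp: mix_def intro: u_local)

lemma avg_mix_diff:
  assumes "\<nu> \<in> set_pmf (rademacher_dist m)"
  shows "avg Q (mix \<nu> s' s) - avg Q (mix \<nu> s s')
       = (1 / real m) * (\<Sum>i<m. \<nu> i * u Q s' i) + (1 / real m) * (\<Sum>i<m. - \<nu> i * u Q s i)"
proof -
  have "avg Q (mix \<nu> s' s) - avg Q (mix \<nu> s s')
      = (1 / real m) * (\<Sum>i<m. u Q (mix \<nu> s' s) i - u Q (mix \<nu> s s') i)"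
    unfolding avg_def by (simp add: sum_subtractf right_diff_distrib)
  also have "\<dots> = (1 / real m) * (\<Sum>i<m. \<nu> i * u Q s' i + - \<nu> i * u Q s i)"
  proof (intro arg_cong[where f = "\<lambda>t. (1 / real m) * t"] sum.cong refl)
    fix i assume "i \<in> {..<m}"
    then have "\<nu> i = -1 \<or> \<nu> i = 1"
      using rademacher_dist_values[OF assms] by simp
    then show "u Q (mix \<nu> s' s) i - u Q (mix \<nu> s s') i = \<nu> i * u Q s' i + - \<nu> i * u Q s i"
      by (elim disjE) (simp_all add: u_mix)
  qed
  finally show ?thesis
    by (simp only: sum.distrib distrib_left)
qed


lemma pair_sup_diff_mix_le:
  assumes "\<nu> \<in> set_pmf (rademacher_dist m)"
  shows "pair_sup_diff (mix \<nu> s s') (mix \<nu> s' s) \<le> rad_sup \<nu> s' + rad_sup (\<lambda>i. - \<nu> i) s"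
  unfolding pair_sup_diff_def
proof (rule cSUP_least[OF QQ_nonempty])
  fix Q assume "Q \<in> QQ"
  show "avg Q (mix \<nu> s' s) - avg Q (mix \<nu> s s') \<le> rad_sup \<nu> s' + rad_sup (\<lambda>i. - \<nu> i) s"
    unfolding avg_mix_diff[OF assms] rad_sup_def
    by (intro add_mono cSUP_upper[OF \<open>Q \<in> QQ\<close> bdd_above_rademacher])
qed

lemma sup_deviation_bounded_differences:
  assumes "\<And>Q s s' x. Q \<in> QQ \<Longrightarrow> s \<in> set_pmf sample \<Longrightarrow> s' \<in> set_pmf sample \<Longrightarrow> x \<in> A
             \<Longrightarrow> (\<forall>z. z \<noteq> x \<longrightarrow> s z = s' z) \<Longrightarrow> avg Q s' - avg Q s \<le> c x"
  shows "bounded_differences (set_pmf sample) A sup_deviation c"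
  unfolding sup_deviation_def
proof (intro bounded_differences_SUP QQ_nonempty bdd_above_deviation)
  fix Q assume "Q \<in> QQ"
  show "bounded_differences (set_pmf sample) A
          (\<lambda>s. measure_pmf.expectation sample (avg Q) - avg Q s) c"
    unfolding bounded_differences_def
  proof (intro ballI impI)
    fix s s' x assume "s \<in> set_pmf sample" "s' \<in> set_pmf sample" "x \<in> A"
      and "\<forall>z. z \<noteq> x \<longrightarrow> s z = s' z"
    from assms[OF \<open>Q \<in> QQ\<close> this] show
      "measure_pmf.expectation sample (avg Q) - avg Q s
         - (measure_pmf.expectation sample (avg Q) - avg Q s') \<le> c x"
      by simp
  qed
qed

theorem expectation_sup_deviation_le:
  "measure_pmf.expectation sample sup_deviation
     \<le> 2 * measure_pmf.expectation sample
             (\<lambda>s. measure_pmf.expectation (rademacher_dist m) (\<lambda>\<nu>. rad_sup \<nu> s))"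
proof -
  let ?R = "rademacher_dist m" and ?PP = "pair_pmf sample sample" and ?E = "measure_pmf.expectation"
  have fin: "finite (set_pmf ?R)" "finite (set_pmf ?PP)"
    using finite_set_rademacher_dist finite_set_sample by auto
  have rad_sup_uminus: "?E ?R (\<lambda>\<nu>. rad_sup (\<lambda>i. - \<nu> i) s) = ?E ?R (\<lambda>\<nu>. rad_sup \<nu> s)" for s
    by (subst (2) rademacher_dist_uminus[symmetric]) simp
  have "?E sample sup_deviation \<le> ?E sample (\<lambda>s. ?E sample (pair_sup_diff s))"
    by (intro integral_mono sup_deviation_le_pair_sup_diff) auto
  also have "\<dots> = ?E ?PP (\<lambda>(s, s'). pair_sup_diff s s')"
    by (simp add: expectation_pair_pmf_finite finite_set_sample)
  also have "\<dots> = ?E ?R (\<lambda>\<nu>. ?E ?PP (\<lambda>(s, s'). pair_sup_diff (mix \<nu> s s') (mix \<nu> s' s)))"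
    by (simp add: expectation_pair_mix)
  also have "\<dots> \<le> ?E ?R (\<lambda>\<nu>. ?E ?PP (\<lambda>(s, s'). rad_sup \<nu> s' + rad_sup (\<lambda>i. - \<nu> i) s))"
    by (intro expectation_finite_pmf_mono fin) (auto intro: pair_sup_diff_mix_le)
  also have "\<dots> = ?E ?R (\<lambda>\<nu>. ?E sample (rad_sup \<nu>) + ?E sample (rad_sup (\<lambda>i. - \<nu> i)))"
    by (simp add: expectation_pair_pmf_finite finite_set_sample)
  also have "\<dots> = ?E sample (\<lambda>s. ?E ?R (\<lambda>\<nu>. rad_sup \<nu> s))
                 + ?E sample (\<lambda>s. ?E ?R (\<lambda>\<nu>. rad_sup (\<lambda>i. - \<nu> i) s))"
    by (simp add: expectation_finite_pmf_swap[OF fin(1) finite_set_sample])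
  finally show ?thesis
    by (simp add: rad_sup_uminus)
qed

end

section \<open>Pairs counted by a user's AUC term\<close>

lemma card_cross_pairs_diff:
  fixes U V N :: "'a set"
  assumes "finite N" "N \<noteq> {}" "U \<subseteq> N" "V \<subseteq> N"
    and "card (V - U) \<le> 1" "card (U - V) \<le> 1"
  shows "card (V \<times> (N - V) - U \<times> (N - U)) + 1 \<le> card N"
proof -
  have fin: "finite U" "finite V"
    using assms(1,3,4) finite_subset by auto
  have "V \<times> (N - V) - U \<times> (N - U) \<subseteq> (V - U) \<times> (N - V) \<union> (V \<inter> U) \<times> (U - V)"
    using assms(3) by blast
  then have "card (V \<times> (N - V) - U \<times> (N - U)) \<le> card ((V - U) \<times> (N - V) \<union> (V \<inter> U) \<times> (U - V))"
    using assms(1) fin by (intro card_mono) auto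
  also have "\<dots> \<le> card (V - U) * card (N - V) + card (V \<inter> U) * card (U - V)"
    using card_Un_le[of "(V - U) \<times> (N - V)" "(V \<inter> U) \<times> (U - V)"]
    by (simp add: card_cartesian_product)
  finally have pairs: "card (V \<times> (N - V) - U \<times> (N - U))
      \<le> card (V - U) * card (N - V) + card (V \<inter> U) * card (U - V)" .
  have "card V = card (V - U) + card (V \<inter> U)"
    using fin by (simp add: card_Diff_subset_Int card_mono)
  moreover have "card N = card V + card (N - V)"
    using assms(1,4) fin by (simp add: card_Diff_subset card_mono)
  moreover have "card (U - V) \<le> card (N - V)"
    using assms(1,3) by (intro card_mono) auto
  moreover have "card N \<ge> 1"
    using assms(1,2) by (simp add: Suc_leI card_gt_0_iff)
  ultimately show ?thesis
    using pairs assms(5,6) by (auto simp: le_Suc_eq)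
qed
lemma sum_cross_pairs_diff_le:
  fixes F :: "'a \<Rightarrow> 'a \<Rightarrow> real" and U V N :: "'a set"
  assumes "finite N" "N \<noteq> {}" "U \<subseteq> N" "V \<subseteq> N"
    and "card (V - U) \<le> 1" "card (U - V) \<le> 1"
    and F: "\<And>a b. 0 \<le> F a b \<and> F a b \<le> 1"
  shows "(\<Sum>p\<in>V. \<Sum>q\<in>N - V. F p q) - (\<Sum>p\<in>U. \<Sum>q\<in>N - U. F p q) \<le> real (card N) - 1"
proof -
  let ?X = "U \<times> (N - U)" and ?Y = "V \<times> (N - V)" and ?G = "\<lambda>z. F (fst z) (snd z)"
  have "finite U" "finite V"
    using assms(1,3,4) finite_subset by auto
  then have fin: "finite ?X" "finite ?Y"
    using assms(1) by auto
  have "sum ?G ?Y = sum ?G (?Y \<inter> ?X) + sum ?G (?Y - ?X)"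
    by (rule sum.Int_Diff[OF fin(2)])
  moreover have "sum ?G (?Y \<inter> ?X) \<le> sum ?G ?X"
    using fin F by (intro sum_mono2) auto
  moreover have "sum ?G (?Y - ?X) \<le> real (card (?Y - ?X))"
    using F sum_mono[of "?Y - ?X" ?G "\<lambda>_. 1"] by simp
  moreover have "real (card (?Y - ?X)) \<le> real (card N) - 1"
    using card_cross_pairs_diff[OF assms(1-6)] by linarith
  ultimately show ?thesis
    by (simp add: sum.cartesian_product case_prod_beta)
qed

lemma omega_eq_image: "omega s ns i = (\<lambda>k. s (i, k)) ` {..<ns i}"
  by (auto simp: omega_def)

lemma user_term_cong:
  assumes "\<And>k. k < ns i \<Longrightarrow> s (i, k) = s' (i, k)"
  shows "user_term w y n ns Q s i = user_term w y n ns Q s' i"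
proof -
  have "omega s ns i = omega s' ns i"
    using assms by (auto simp: omega_eq_image)
  then show ?thesis
    unfolding user_term_def omegabar_def by simp
qed

lemma user_term_bounds:
  assumes "1 \<le> ns i" "ns i < n" and Q: "\<And>a b c. 0 \<le> Q a b c \<and> Q a b c \<le> 1"
  shows "0 \<le> user_term w y n ns Q s i \<and> user_term w y n ns Q s i \<le> real n"
proof -
  let ?O = "omega s ns i" and ?Ob = "omegabar n s ns i"
  let ?S = "\<Sum>p\<in>?O. \<Sum>q\<in>?Ob. Q (w i) (y p) (y q)"
  have "?S \<le> real (card ?O) * real (card ?Ob)"
    using Q sum_mono[of ?O "\<lambda>p. \<Sum>q\<in>?Ob. Q (w i) (y p) (y q)" "\<lambda>_. real (card ?Ob)"]
      sum_mono[of ?Ob "\<lambda>q. Q (w i) (y _) (y q)" "\<lambda>_. 1"]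
    by (simp add: mult.commute)
  also have "\<dots> \<le> real (ns i) * real n"
  proof (intro mult_mono)
    show "real (card ?O) \<le> real (ns i)"
      using card_image_le[of "{..<ns i}" "\<lambda>k. s (i, k)"] by (simp add: omega_eq_image)
    show "real (card ?Ob) \<le> real n"
      using card_mono[of "{..<n}" ?Ob] by (simp add: omegabar_def)
  qed auto
  finally have "?S / (real (ns i) * real (n - ns i)) \<le> real (ns i) * real n / (real (ns i) * 1)"
    using assms(1,2) by (intro frac_le) auto
  moreover have "?S \<ge> 0"
    using Q by (intro sum_nonneg) auto
  ultimately show ?thesis
    using assms(1) by (simp add: user_term_def)
qed

lemma user_term_change_le:
  assumes "1 \<le> ns i" "ns i < n" and Q: "\<And>a b c. 0 \<le> Q a b c \<and> Q a b c \<le> 1"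
    and "\<And>k. k < ns i \<Longrightarrow> s (i, k) < n" "\<And>k. k < ns i \<Longrightarrow> s' (i, k) < n"
    and agree: "\<And>k. k < ns i \<Longrightarrow> k \<noteq> k' \<Longrightarrow> s (i, k) = s' (i, k)"
  shows "user_term w y n ns Q s' i - user_term w y n ns Q s i
         \<le> (real n - 1) / (real (ns i) * real (n - ns i))"
proof -
  let ?U = "omega s ns i" and ?V = "omega s' ns i"
  have "?V - ?U \<subseteq> {s' (i, k')}" "?U - ?V \<subseteq> {s (i, k')}"
    using agree by (auto simp: omega_eq_image) (metis imageI lessThan_iff)
  then have "card (?V - ?U) \<le> 1" "card (?U - ?V) \<le> 1"
    by (auto dest: card_mono[rotated])
  moreover have "?U \<subseteq> {..<n}" "?V \<subseteq> {..<n}"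
    using assms(4,5) by (auto simp: omega_eq_image)
  ultimately have pairs: "(\<Sum>p\<in>?V. \<Sum>q\<in>{..<n} - ?V. Q (w i) (y p) (y q))
      - (\<Sum>p\<in>?U. \<Sum>q\<in>{..<n} - ?U. Q (w i) (y p) (y q)) \<le> real n - 1"
    using sum_cross_pairs_diff_le[of "{..<n}" ?U ?V "\<lambda>p q. Q (w i) (y p) (y q)"] assms(2) Q
    by auto
  have "user_term w y n ns Q s' i - user_term w y n ns Q s i
      = ((\<Sum>p\<in>?V. \<Sum>q\<in>{..<n} - ?V. Q (w i) (y p) (y q))
         - (\<Sum>p\<in>?U. \<Sum>q\<in>{..<n} - ?U. Q (w i) (y p) (y q)))
        / (real (ns i) * real (n - ns i))"
    unfolding user_term_def omegabar_def by (simp add: diff_divide_distrib)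
  also have "\<dots> \<le> (real n - 1) / (real (ns i) * real (n - ns i))"
    using pairs assms(1,2) by (intro divide_right_mono) auto
  finally show ?thesis .
qed

section \<open>The AUC sample\<close>

locale auc_setting =
  fixes m n :: nat and w :: "nat \<Rightarrow> 'w" and y :: "nat \<Rightarrow> 'y" and ns :: "nat \<Rightarrow> nat"
    and D :: "nat \<Rightarrow> nat pmf" and QQ :: "('w \<Rightarrow> 'y \<Rightarrow> 'y \<Rightarrow> real) set"
  assumes m_ge_1: "m \<ge> 1" and ns_bounds: "\<And>i. i < m \<Longrightarrow> 1 \<le> ns i \<and> ns i < n"
    and D_support: "\<And>i. i < m \<Longrightarrow> set_pmf (D i) \<subseteq> {..<n}"
    and QQ_range: "\<And>Q a b c. Q \<in> QQ \<Longrightarrow> 0 \<le> Q a b c \<and> Q a b c \<le> 1"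
    and QQ_not_empty: "QQ \<noteq> {}"
begin

abbreviation draws :: "(nat \<times> nat) set" where
  "draws \<equiv> {(i, k). i < m \<and> k < ns i}"

lemma draws_eq_Sigma: "draws = Sigma {..<m} (\<lambda>i. {..<ns i})"
  by auto

sublocale symm: rademacher_symmetrization draws 0 "\<lambda>(i, k). D i" m QQ
  "\<lambda>Q s i. user_term w y n ns Q s i" "real n"
proof
  show "finite draws"
    unfolding draws_eq_Sigma by simp
  show "finite (set_pmf (case x of (i, k) \<Rightarrow> D i))" if "x \<in> draws" for x
    using that D_support by (auto intro: finite_subset[of _ "{..<n}"])
  show "\<bar>user_term w y n ns Q s i\<bar> \<le> real n" if "Q \<in> QQ" "i < m" for Q s i
    using user_term_bounds[of ns i n Q] ns_bounds[OF that(2)] QQ_range[OF that(1)] by simp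
  show "user_term w y n ns Q s i = user_term w y n ns Q s' i"
    if "\<And>k. s (i, k) = s' (i, k)" for Q s s' i
    using that by (rule user_term_cong)
qed (use m_ge_1 QQ_not_empty in auto)

lemma sample_dist_eq: "sample_dist m ns D = symm.sample"
  by (simp add: sample_dist_def)

lemma emp_risk_eq: "emp_risk m w y n ns Q s = symm.avg Q s"
  by (simp add: emp_risk_def symm.avg_def)

lemma true_risk_eq: "true_risk m w y n ns D Q = measure_pmf.expectation symm.sample (symm.avg Q)"
  by (simp add: true_risk_def sample_dist_eq emp_risk_eq)

lemma rad_auc_eq:
  "rad_auc m w y n ns D QQ = 2 * measure_pmf.expectation symm.sample
     (\<lambda>s. measure_pmf.expectation (rademacher_dist m) (\<lambda>\<nu>. symm.rad_sup \<nu> s))"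
  by (simp add: rad_auc_def emp_rad_auc_def sample_dist_eq symm.rad_sup_def)

lemma sample_values_less:
  assumes "s \<in> set_pmf symm.sample" "i < m" "k < ns i"
  shows "s (i, k) < n"
proof -
  have "s (i, k) \<in> set_pmf (D i)"
    using assms by (auto simp: set_Pi_pmf[OF symm.finite_A] PiE_dflt_def)
  then show ?thesis
    using D_support[OF assms(2)] by auto
qed

definition difference_bound :: "nat \<times> nat \<Rightarrow> real" where
  "difference_bound x = (real n - 1) / (real m * real (ns (fst x)) * real (n - ns (fst x)))"

lemma avg_change_le:
  assumes "Q \<in> QQ" "s \<in> set_pmf symm.sample" "s' \<in> set_pmf symm.sample" "x \<in> draws"
    and agree: "\<forall>z. z \<noteq> x \<longrightarrow> s z = s' z"
  shows "symm.avg Q s' - symm.avg Q s \<le> difference_bound x"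
proof -
  obtain i k0 where x: "x = (i, k0)" "i < m" "k0 < ns i"
    using assms(4) by auto
  let ?u = "\<lambda>s j. user_term w y n ns Q s j"
  have other_users: "?u s' j = ?u s j" if "j \<noteq> i" for j
    by (rule user_term_cong) (use agree x(1) that in auto)
  have "(\<Sum>j<m. ?u s' j - ?u s j) = (\<Sum>j<m. if j = i then ?u s' i - ?u s i else 0)"
    by (rule sum.cong) (auto simp: other_users)
  then have "symm.avg Q s' - symm.avg Q s = (?u s' i - ?u s i) / real m"
    unfolding symm.avg_def using x(2) by (simp add: sum_subtractf diff_divide_distrib[symmetric])
  also have "\<dots> \<le> ((real n - 1) / (real (ns i) * real (n - ns i))) / real m"
    using ns_bounds[OF x(2)] QQ_range[OF assms(1)] sample_values_less assms(2,3) agree x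
    by (intro divide_right_mono user_term_change_le[where k' = k0]) auto
  finally show ?thesis
    by (simp add: difference_bound_def x(1) mult.commute mult.left_commute)
qed

lemma sum_difference_bound_squares:
  "(\<Sum>x\<in>draws. (difference_bound x)\<^sup>2)
     = (real n - 1)^2 / real m ^ 2 * (\<Sum>i<m. 1 / (real (ns i) * real (n - ns i) ^ 2))"
proof -
  have "(\<Sum>x\<in>draws. (difference_bound x)\<^sup>2) = (\<Sum>i<m. \<Sum>k<ns i. (difference_bound (i, k))\<^sup>2)"
    unfolding draws_eq_Sigma by (simp add: sum.Sigma)
  also have "\<dots> = (\<Sum>i<m. (real n - 1)^2 / real m ^ 2 * (1 / (real (ns i) * real (n - ns i) ^ 2)))"
  proof (rule sum.cong[OF refl])
    fix i assume "i \<in> {..<m}"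
    define a b where "a = real (ns i)" and "b = real (n - ns i)"
    have "a > 0" "b > 0"
      using ns_bounds[of i] \<open>i \<in> {..<m}\<close> by (auto simp: a_def b_def)
    have "(\<Sum>k<ns i. (difference_bound (i, k))\<^sup>2) = a * ((real n - 1) / (real m * a * b))\<^sup>2"
      by (simp add: difference_bound_def a_def b_def)
    also have "\<dots> = (real n - 1)^2 / real m ^ 2 * (1 / (a * b ^ 2))"
      using \<open>a > 0\<close> \<open>b > 0\<close> m_ge_1 by (simp add: power2_eq_square field_simps)
    finally show "(\<Sum>k<ns i. (difference_bound (i, k))\<^sup>2)
        = (real n - 1)^2 / real m ^ 2 * (1 / (real (ns i) * real (n - ns i) ^ 2))"
      by (simp only: a_def b_def)
  qed
  finally show ?thesis
    by (simp add: sum_distrib_left)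
qed

lemma sup_deviation_concentration:
  assumes "0 < \<delta>" "\<delta> < 1"
  defines "t \<equiv> sqrt (ln (1 / \<delta>) * (real n - 1)^2 / (2 * real m ^ 2)
                   * (\<Sum>i<m. 1 / (real (ns i) * real (n - ns i) ^ 2)))"
  shows "measure_pmf.prob symm.sample
           {s. symm.sup_deviation s - measure_pmf.expectation symm.sample symm.sup_deviation < t}
         \<ge> 1 - \<delta>"
proof -
  define C where "C = (\<Sum>x\<in>draws. (difference_bound x)\<^sup>2)"
  let ?dev = "\<lambda>s. symm.sup_deviation s - measure_pmf.expectation symm.sample symm.sup_deviation"
  have "(\<Sum>i<m. 1 / (real (ns i) * real (n - ns i) ^ 2)) > 0"
  proof (rule sum_pos)
    show "{..<m} \<noteq> {}"
      using m_ge_1 by (simp add: lessThan_empty_iff)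
    show "0 < 1 / (real (ns i) * real (n - ns i) ^ 2)" if "i \<in> {..<m}" for i
      using ns_bounds[of i] that by simp
  qed simp
  moreover have "real n - 1 > 0"
    using ns_bounds[of 0] m_ge_1 by auto
  moreover have "ln (1 / \<delta>) > 0"
    using assms(1,2) by simp
  ultimately have "C > 0" "t > 0" "t\<^sup>2 = ln (1 / \<delta>) * C / 2"
    unfolding C_def t_def sum_difference_bound_squares using m_ge_1 by (simp_all add: field_simps)
  have "measure_pmf.prob symm.sample {s. ?dev s \<ge> t} \<le> exp (- 2 * t\<^sup>2 / C)"
    unfolding C_def
    by (intro mcdiarmid_Pi_pmf symm.finite_A symm.finite_p \<open>t > 0\<close>
        symm.sup_deviation_bounded_differences avg_change_le \<open>C > 0\<close>[unfolded C_def]) auto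
  also have "exp (- 2 * t\<^sup>2 / C) = \<delta>"
    using \<open>C > 0\<close> assms(1) by (simp add: \<open>t\<^sup>2 = ln (1 / \<delta>) * C / 2\<close> ln_div)
  finally have "measure_pmf.prob symm.sample {s. ?dev s \<ge> t} \<le> \<delta>" .
  moreover have "{s. ?dev s < t} = space symm.sample - {s. ?dev s \<ge> t}"
    by auto
  ultimately show ?thesis
    using measure_pmf.prob_compl[of "{s. ?dev s \<ge> t}" symm.sample] by simp
qed

lemma risk_le_of_small_sup_deviation:
  assumes "symm.sup_deviation s - measure_pmf.expectation symm.sample symm.sup_deviation < t"
    and "Q \<in> QQ"
  shows "true_risk m w y n ns D Q \<le> emp_risk m w y n ns Q s + rad_auc m w y n ns D QQ + t"
proof -
  have "true_risk m w y n ns D Q - emp_risk m w y n ns Q s \<le> symm.sup_deviation s"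
    using symm.deviation_le_sup_deviation[OF assms(2)] by (simp add: true_risk_eq emp_risk_eq)
  moreover have "measure_pmf.expectation symm.sample symm.sup_deviation \<le> rad_auc m w y n ns D QQ"
    using symm.expectation_sup_deviation_le by (simp add: rad_auc_eq)
  ultimately show ?thesis
    using assms(1) by linarith
qed
end

theorem mainTheorem7:
  fixes m n :: nat
    and w :: "nat \<Rightarrow> 'w" and y :: "nat \<Rightarrow> 'y"
    and ns :: "nat \<Rightarrow> nat"
    and D :: "nat \<Rightarrow> nat pmf"
    and QQ :: "('w \<Rightarrow> 'y \<Rightarrow> 'y \<Rightarrow> real) set"
    and \<delta> :: real
  assumes "m \<ge> 1"
    and "\<And>i. i < m \<Longrightarrow> 1 \<le> ns i \<and> ns i < n"
    and "\<And>i. i < m \<Longrightarrow> set_pmf (D i) \<subseteq> {..<n}"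
    and "\<And>Q a b c. Q \<in> QQ \<Longrightarrow> 0 \<le> Q a b c \<and> Q a b c \<le> 1"
    and "0 < \<delta>" and "\<delta> < 1"
  shows "measure_pmf.prob (sample_dist m ns D)
           {s. \<forall>Q\<in>QQ. true_risk m w y n ns D Q
                 \<le> emp_risk m w y n ns Q s + rad_auc m w y n ns D QQ
                   + sqrt (ln (1 / \<delta>) * (real n - 1)^2 / (2 * real m ^ 2)
                       * (\<Sum>i<m. 1 / (real (ns i) * real (n - ns i) ^ 2)))}
         \<ge> 1 - \<delta>"
proof (cases "QQ = {}")
  case True
  then show ?thesis
    using assms(5) by simp
next
  case False
  interpret auc_setting m n w y ns D QQ
    using assms False by unfold_locales auto
  define t where "t = sqrt (ln (1 / \<delta>) * (real n - 1)^2 / (2 * real m ^ 2)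
                       * (\<Sum>i<m. 1 / (real (ns i) * real (n - ns i) ^ 2)))"
  let ?E = "measure_pmf.expectation symm.sample symm.sup_deviation"
  have "{s. symm.sup_deviation s - ?E < t} \<subseteq> {s. \<forall>Q\<in>QQ. true_risk m w y n ns D Q
          \<le> emp_risk m w y n ns Q s + rad_auc m w y n ns D QQ + t}"
    using risk_le_of_small_sup_deviation by blast
  then have "measure_pmf.prob symm.sample {s. symm.sup_deviation s - ?E < t}
      \<le> measure_pmf.prob (sample_dist m ns D) {s. \<forall>Q\<in>QQ. true_risk m w y n ns D Q
          \<le> emp_risk m w y n ns Q s + rad_auc m w y n ns D QQ + t}"
    unfolding sample_dist_eq by (rule measure_pmf.finite_measure_mono) simp
  with sup_deviation_concentration[OF assms(5,6)] show ?thesis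
    unfolding t_def by linarith
qed

end
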